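(* For every integer $k\ge 0$, $$\sum_{n\ge k}B(n,k)\frac{x^n}{n!}=\tan^k x\,\sec x$$ as formal power series (equivalently, as analytic functions near $0$).
   Context: A labeled ballot path is a lattice path from $(0,0)$ with steps $u=(1,1)$, $d=(1,-1)$ never going below the $x$-axis, each step carrying an integer label between $0$ and its height, where the height of a step is the smaller $y$-coordinate of its endpoints. $B(n,k)$ is the number of labeled ballot paths from $(0,0)$ ending at $(n,k)$. *)

theory Defs
  imports Complex_Main "HOL-Computational_Algebra.Formal_Power_Series"
begin

text \<open>A labeled path of length n is a list of pairs (s, l): s is the step
  (1 for u = (1,1), -1 for d = (1,-1)) and l is the integer label (a natural number).\<close>

definition ypos :: "(int \<times> nat) list \<Rightarrow> nat \<Rightarrow> int" where
  "ypos p i = sum_list (map fst (take i p))"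

definition labeled_ballot_path :: "(int \<times> nat) list \<Rightarrow> bool" where
  "labeled_ballot_path p \<longleftrightarrow>
     (\<forall>i < length p. fst (p ! i) \<in> {1, -1} \<and> 0 \<le> ypos p (Suc i) \<and>
        int (snd (p ! i)) \<le> min (ypos p i) (ypos p (Suc i)))"

definition B :: "nat \<Rightarrow> nat \<Rightarrow> nat" where
  "B n k = card {p. labeled_ballot_path p \<and> length p = n \<and> ypos p n = int k}"

end

theory Submission
  imports Defs
begin

(* Proof idea.  Both sides are exponential generating functions satisfying the
   same "differential recurrence", which determines them uniquely.

   Analytic side: with T = tan x and C = sec x one has T' = 1 + T^2 = C^2 and
   C' = T C, so G_k = T^k C satisfies  G_k' = k G_(k-1) + (k+1) G_(k+1)  and
   G_k(0) = [k = 0].  In terms of coefficients this is a recurrence for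
   n! [x^n] G_k.

   Combinatorial side: removing the last step of a labeled ballot path of length
   n+1 ending at height k leaves a path ending at height k-1 (last step u, whose
   label is one of k choices) or at height k+1 (last step d, with k+1 choices),
   hence  B(n+1,k) = k B(n,k-1) + (k+1) B(n,k+1)  and  B(0,k) = [k = 0].

   The two recurrences coincide, so n! [x^n] G_k = B(n,k) by induction on n;
   finally B(n,k) = 0 for n < k, which accounts for the guard in the statement. *)

text \<open>cos has constant term 1, so it is invertible and sec = inverse cos.\<close>
lemma fps_cos_times_inverse: "fps_cos c * inverse (fps_cos c) = 1"
  by (rule inverse_mult_eq_1') simp

lemma fps_tan_eq_sin_times_sec: "fps_tan c = fps_sin c * inverse (fps_cos c)"
  by (simp add: fps_tan_def fps_divide_unit)

lemma fps_sec_squared: "inverse (fps_cos c) ^ 2 = 1 + fps_tan c ^ 2"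
proof -
  have "inverse (fps_cos c) ^ 2 = (fps_cos c ^ 2 + fps_sin c ^ 2) * inverse (fps_cos c) ^ 2"
    by (simp add: fps_sin_cos_sum_of_squares)
  also have "\<dots> = (fps_cos c * inverse (fps_cos c)) ^ 2 + (fps_sin c * inverse (fps_cos c)) ^ 2"
    by (simp add: algebra_simps power2_eq_square)
  finally show ?thesis
    by (simp add: fps_cos_times_inverse fps_tan_eq_sin_times_sec)
qed

lemma fps_sec_deriv:
  "fps_deriv (inverse (fps_cos c)) = fps_const c * fps_tan c * inverse (fps_cos c)"
  by (simp add: fps_inverse_deriv fps_cos_deriv fps_tan_eq_sin_times_sec power2_eq_square
      flip: fps_const_neg)

lemma fps_tan_deriv': "fps_deriv (fps_tan c) = fps_const c * (1 + fps_tan c ^ 2)"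
proof -
  have "fps_deriv (fps_tan c) = fps_const c * fps_cos c * inverse (fps_cos c)
          + fps_sin c * (fps_const c * fps_tan c * inverse (fps_cos c))"
    by (simp add: fps_tan_eq_sin_times_sec fps_sec_deriv fps_sin_deriv)
  also have "\<dots> = fps_const c * (1 + fps_tan c ^ 2)"
    using fps_cos_times_inverse[of c]
    by (simp add: fps_tan_eq_sin_times_sec power2_eq_square algebra_simps)
  finally show ?thesis .
qed

definition tan_pow_sec :: "nat \<Rightarrow> 'a::field_char_0 fps" where
  "tan_pow_sec k = fps_tan 1 ^ k * inverse (fps_cos 1)"

lemma tan_pow_sec_deriv:
  "fps_deriv (tan_pow_sec k :: 'a::field_char_0 fps)
     = of_nat k * tan_pow_sec (k - 1) + of_nat (k + 1) * tan_pow_sec (k + 1)"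
proof (cases k)
  case 0
  then show ?thesis by (simp add: tan_pow_sec_def fps_sec_deriv)
next
  case (Suc m)
  let ?T = "fps_tan (1::'a)" and ?C = "inverse (fps_cos (1::'a))"
  have "fps_deriv (?T ^ k) = of_nat k * ?C ^ 2 * ?T ^ m"
    using fps_deriv_power'[of ?T k] by (simp add: Suc fps_tan_deriv' fps_sec_squared)
  then have "fps_deriv (tan_pow_sec k :: 'a fps) = of_nat k * ?C ^ 2 * ?T ^ m * ?C + ?T ^ k * (?T * ?C)"
    by (simp add: tan_pow_sec_def fps_sec_deriv)
  also have "\<dots> = of_nat k * tan_pow_sec (k - 1) + of_nat (k + 1) * tan_pow_sec (k + 1)"
    unfolding fps_sec_squared by (simp add: tan_pow_sec_def Suc algebra_simps power2_eq_square)
  finally show ?thesis .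
qed

lemma tan_pow_sec_nth_0: "fps_nth (tan_pow_sec k) 0 = (if k = 0 then 1 else 0)"
  by (simp add: tan_pow_sec_def fps_tan_eq_sin_times_sec fps_nth_power_0)

lemma tan_pow_sec_coeff_Suc:
  "fact (Suc n) * fps_nth (tan_pow_sec k) (Suc n)
     = of_nat k * (fact n * fps_nth (tan_pow_sec (k - 1)) n)
       + of_nat (k + 1) * (fact n * fps_nth (tan_pow_sec (k + 1) :: 'a::field_char_0 fps) n)"
proof -
  have "fact (Suc n) * fps_nth (tan_pow_sec k) (Suc n) = fact n * fps_nth (fps_deriv (tan_pow_sec k :: 'a fps)) n"
    by (simp add: fact_Suc algebra_simps)
  also have "\<dots> = of_nat k * (fact n * fps_nth (tan_pow_sec (k - 1)) n)
                  + of_nat (k + 1) * (fact n * fps_nth (tan_pow_sec (k + 1) :: 'a fps) n)"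
    unfolding tan_pow_sec_deriv fps_add_nth fps_of_nat[symmetric] fps_mult_left_const_nth
    by (simp add: algebra_simps)
  finally show ?thesis .
qed

lemma ypos_snoc: "i \<le> length p \<Longrightarrow> ypos (p @ [x]) i = ypos p i"
  by (simp add: ypos_def)

lemma ypos_snoc_last: "ypos (p @ [x]) (Suc (length p)) = ypos p (length p) + fst x"
  by (simp add: ypos_def)

lemma labeled_ballot_path_snoc:
  "labeled_ballot_path (p @ [x]) \<longleftrightarrow>
     labeled_ballot_path p \<and> fst x \<in> {1, -1} \<and> 0 \<le> ypos p (length p) + fst x \<and>
     int (snd x) \<le> min (ypos p (length p)) (ypos p (length p) + fst x)"
proof -
  have split_last: "(\<forall>i < length (p @ [x]). Q i) \<longleftrightarrow> (\<forall>i < length p. Q i) \<and> Q (length p)" for Q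
    by (auto simp: less_Suc_eq)
  have prefix: "(\<forall>i < length p. fst ((p @ [x]) ! i) \<in> {1, -1} \<and> 0 \<le> ypos (p @ [x]) (Suc i) \<and>
      int (snd ((p @ [x]) ! i)) \<le> min (ypos (p @ [x]) i) (ypos (p @ [x]) (Suc i)))
      \<longleftrightarrow> labeled_ballot_path p"
    unfolding labeled_ballot_path_def
    by (intro all_cong1 imp_cong refl) (simp add: nth_append ypos_snoc Suc_le_eq)
  show ?thesis
    unfolding labeled_ballot_path_def[of "p @ [x]"] split_last prefix[symmetric]
    by (simp add: ypos_snoc ypos_snoc_last)
qed

definition ballot_paths :: "nat \<Rightarrow> int \<Rightarrow> (int \<times> nat) list set" where
  "ballot_paths n h = {p. labeled_ballot_path p \<and> length p = n \<and> ypos p n = h}"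

lemma ballot_paths_0: "ballot_paths 0 h = (if h = 0 then {[]} else {})"
  by (auto simp: ballot_paths_def labeled_ballot_path_def ypos_def)

lemma snoc_in_ballot_paths:
  assumes "length p = n"
  shows "p @ [(s, l)] \<in> ballot_paths (Suc n) h \<longleftrightarrow>
           s \<in> {1, -1} \<and> p \<in> ballot_paths n (h - s) \<and> int l \<le> min (h - s) h"
  using assms labeled_ballot_path_snoc[of p "(s, l)"] ypos_snoc_last[of p "(s, l)"]
  by (auto simp: ballot_paths_def)

definition append_step :: "int \<Rightarrow> (int \<times> nat) list \<times> nat \<Rightarrow> (int \<times> nat) list" where
  "append_step s = (\<lambda>(p, l). p @ [(s, l)])"

definition labels :: "int \<Rightarrow> nat set" where
  "labels h = {..<nat (h + 1)}"

lemma in_labels: "l \<in> labels h \<longleftrightarrow> int l \<le> h"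
  by (auto simp: labels_def)

lemma ballot_paths_Suc:
  "ballot_paths (Suc n) h =
     append_step 1 ` (ballot_paths n (h - 1) \<times> labels (h - 1)) \<union>
     append_step (-1) ` (ballot_paths n (h + 1) \<times> labels h)"
  (is "_ = ?U \<union> ?D")
proof
  show "ballot_paths (Suc n) h \<subseteq> ?U \<union> ?D"
  proof
    fix q assume q: "q \<in> ballot_paths (Suc n) h"
    then have "q \<noteq> []" by (auto simp: ballot_paths_def)
    then obtain p s l where q_eq: "q = p @ [(s, l)]"
      by (metis prod.exhaust rev_exhaust)
    with q have "length p = n" by (simp add: ballot_paths_def)
    with q q_eq have "s \<in> {1, -1}" "p \<in> ballot_paths n (h - s)" "int l \<le> min (h - s) h"
      by (simp_all add: snoc_in_ballot_paths)
    then show "q \<in> ?U \<union> ?D"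
      unfolding q_eq append_step_def by (force simp: in_labels)
  qed
  have "length p = n" if "p \<in> ballot_paths n h'" for p h'
    using that by (simp add: ballot_paths_def)
  then show "?U \<union> ?D \<subseteq> ballot_paths (Suc n) h"
    by (auto simp: append_step_def in_labels snoc_in_ballot_paths)
qed

lemma finite_ballot_paths: "finite (ballot_paths n h)"
  by (induction n arbitrary: h) (simp_all add: ballot_paths_0 ballot_paths_Suc labels_def)

text \<open>Counting the decomposition: the two parts are disjoint and appending a step is injective;
  an up step into height h has height h - 1, hence nat h labels, and a down step into
  height h has height h, hence nat (h + 1) labels.\<close>
lemma card_ballot_paths_Suc:
  "card (ballot_paths (Suc n) h)
     = card (ballot_paths n (h - 1)) * nat h + card (ballot_paths n (h + 1)) * nat (h + 1)"
proof -
  let ?U = "ballot_paths n (h - 1) \<times> labels (h - 1)"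
  let ?D = "ballot_paths n (h + 1) \<times> labels h"
  have inj: "inj (append_step s)" for s
    by (auto simp: inj_def append_step_def)
  have "card (ballot_paths (Suc n) h) = card (append_step 1 ` ?U) + card (append_step (-1) ` ?D)"
    unfolding ballot_paths_Suc
    by (rule card_Un_disjoint) (auto simp: finite_ballot_paths labels_def append_step_def)
  also have "\<dots> = card ?U + card ?D"
    by (simp add: card_image inj_on_subset[OF inj])
  finally show ?thesis
    by (simp add: card_cartesian_product labels_def)
qed

lemma B_eq_card_ballot_paths: "B n k = card (ballot_paths n (int k))"
  by (simp add: B_def ballot_paths_def)

lemma B_0: "B 0 k = (if k = 0 then 1 else 0)"
  by (simp add: B_eq_card_ballot_paths ballot_paths_0)

lemma B_Suc: "B (Suc n) k = k * B n (k - 1) + (k + 1) * B n (k + 1)"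
proof (cases k)
  case 0
  then show ?thesis by (simp add: B_eq_card_ballot_paths card_ballot_paths_Suc)
next
  case (Suc m)
  then show ?thesis
    by (simp add: B_eq_card_ballot_paths card_ballot_paths_Suc nat_add_distrib add.commute)
qed

lemma B_eq_0: "n < k \<Longrightarrow> B n k = 0"
  by (induction n arbitrary: k) (simp_all add: B_0 B_Suc)

text \<open>Both sides satisfy the same recurrence with the same initial values.\<close>
lemma tan_pow_sec_coeff: "fact n * fps_nth (tan_pow_sec k :: 'a::field_char_0 fps) n = of_nat (B n k)"
proof (induction n arbitrary: k)
  case 0
  then show ?case by (simp add: tan_pow_sec_nth_0 B_0)
next
  case (Suc n)
  have "fact (Suc n) * fps_nth (tan_pow_sec k :: 'a fps) (Suc n)
          = of_nat k * of_nat (B n (k - 1)) + of_nat (k + 1) * of_nat (B n (k + 1))"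
    by (simp only: tan_pow_sec_coeff_Suc Suc.IH)
  also have "\<dots> = of_nat (B (Suc n) k)"
    by (simp add: B_Suc algebra_simps)
  finally show ?case .
qed

theorem mainTheorem5:
  fixes k :: nat
  shows "Abs_fps (\<lambda>n. if k \<le> n then real (B n k) / fact n else 0)
           = (fps_tan 1) ^ k * inverse (fps_cos (1::real))"
proof (rule fps_ext)
  fix n
  have "fps_nth (tan_pow_sec k :: real fps) n = real (B n k) / fact n"
    using tan_pow_sec_coeff[of n k] by (simp add: field_simps)
  moreover have "k \<le> n" if "B n k \<noteq> 0"
    using B_eq_0[of n k] that by linarith
  ultimately show "fps_nth (Abs_fps (\<lambda>n. if k \<le> n then real (B n k) / fact n else 0)) n
                   = fps_nth (fps_tan 1 ^ k * inverse (fps_cos (1::real))) n"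
    by (auto simp: tan_pow_sec_def)
qed

end
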